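(* Let $\theta\in[0,1]^V$ be a feasible solution on a unit-weight graph with $n=|V|$ vertices. Then $\|W\theta\|_1\ge n+\|\theta\|_1-\mathsf{OPT}$.
   Context: For a unit-weight graph, $W$ is a symmetric $\{0,1\}$ matrix with $W_{v,v}=1$ (adjacency matrix plus identity). A vector $\theta\in\mathbb{R}_{\ge0}^V$ is feasible if $W\theta\ge\mathbf 1$ coordinatewise. $\mathsf{OPT}=\min\{\|\theta\|_1:\theta\ge0,\ W\theta\ge\mathbf 1\}$. *)

theory Defs
  imports Main "HOL-Analysis.Analysis"
begin

definition unit_weight_matrix :: "('v \<Rightarrow> 'v \<Rightarrow> real) \<Rightarrow> bool" where
  "unit_weight_matrix W \<longleftrightarrow>
     (\<forall>u v. W u v \<in> {0, 1}) \<and> (\<forall>u v. W u v = W v u) \<and> (\<forall>v. W v v = 1)"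

definition matvec :: "('v::finite \<Rightarrow> 'v \<Rightarrow> real) \<Rightarrow> ('v \<Rightarrow> real) \<Rightarrow> 'v \<Rightarrow> real" where
  "matvec W \<theta> u = (\<Sum>v\<in>UNIV. W u v * \<theta> v)"

definition l1norm :: "('v::finite \<Rightarrow> real) \<Rightarrow> real" where
  "l1norm x = (\<Sum>v\<in>UNIV. \<bar>x v\<bar>)"

definition feasible :: "('v::finite \<Rightarrow> 'v \<Rightarrow> real) \<Rightarrow> ('v \<Rightarrow> real) \<Rightarrow> bool" where
  "feasible W \<theta> \<longleftrightarrow> (\<forall>v. \<theta> v \<ge> 0) \<and> (\<forall>u. matvec W \<theta> u \<ge> 1)"

definition OPT :: "('v::finite \<Rightarrow> 'v \<Rightarrow> real) \<Rightarrow> real" where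
  "OPT W = Inf (l1norm ` {\<theta>. feasible W \<theta>})"

end

theory Submission
  imports Defs
begin

text \<open>
  Since all entries are nonnegative, \<open>\<parallel>W\<theta>\<parallel>\<^sub>1 - \<parallel>\<theta>\<parallel>\<^sub>1 = \<Sum>(W\<theta>) - \<Sum>\<theta>\<close>, so it suffices to show
  \<open>n - \<parallel>\<phi>\<parallel>\<^sub>1 \<le> \<Sum>(W\<theta>) - \<Sum>\<theta>\<close> for every feasible \<open>\<phi>\<close>. Capping \<open>\<phi>\<close> at 1 keeps it feasible
  because \<open>W\<close> is a 0/1 matrix; call the result \<open>p\<close>. Then, using \<open>W\<theta> \<ge> 1\<close>, the symmetry of \<open>W\<close>
  and \<open>Wp \<ge> 1\<close>,
  \<open>n - \<parallel>\<phi>\<parallel>\<^sub>1 \<le> \<langle>1 - p, 1\<rangle> \<le> \<langle>1 - p, W\<theta>\<rangle> = \<langle>W1 - Wp, \<theta>\<rangle> \<le> \<langle>W1 - 1, \<theta>\<rangle> = \<Sum>(W\<theta>) - \<Sum>\<theta>\<close>.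
\<close>

lemma matvec_diff: "matvec W (\<lambda>v. x v - y v) u = matvec W x u - matvec W y u"
  unfolding matvec_def by (simp add: right_diff_distrib sum_subtractf)

lemma sum_mult_matvec_sym:
  fixes W :: "'v::finite \<Rightarrow> 'v \<Rightarrow> real"
  assumes "\<forall>u v. W u v = W v u"
  shows "(\<Sum>u\<in>UNIV. x u * matvec W y u) = (\<Sum>u\<in>UNIV. matvec W x u * y u)"
proof -
  have "(\<Sum>u\<in>UNIV. x u * matvec W y u) = (\<Sum>u\<in>UNIV. \<Sum>v\<in>UNIV. W v u * x u * y v)"
    unfolding matvec_def using assms by (simp add: sum_distrib_left mult.commute mult.left_commute)
  also have "\<dots> = (\<Sum>v\<in>UNIV. \<Sum>u\<in>UNIV. W v u * x u * y v)"
    by (rule sum.swap)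
  also have "\<dots> = (\<Sum>v\<in>UNIV. matvec W x v * y v)"
    unfolding matvec_def by (simp add: sum_distrib_right)
  finally show ?thesis .
qed

lemma l1norm_nonneg_eq_sum: "(\<And>v. 0 \<le> x v) \<Longrightarrow> l1norm x = (\<Sum>v\<in>UNIV. x v)"
  unfolding l1norm_def by simp

lemma matvec_nonneg:
  "(\<And>u v. 0 \<le> W u v) \<Longrightarrow> (\<And>v. 0 \<le> x v) \<Longrightarrow> 0 \<le> matvec W x u"
  unfolding matvec_def by (simp add: sum_nonneg)

lemma feasible_min_one:
  fixes W :: "'v::finite \<Rightarrow> 'v \<Rightarrow> real"
  assumes W01: "\<forall>u v. W u v \<in> {0, 1}" and feasible: "feasible W \<phi>"
  shows "feasible W (\<lambda>v. min (\<phi> v) 1)"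
proof -
  have \<phi>_nonneg: "0 \<le> \<phi> v" for v
    using feasible unfolding feasible_def by auto
  have "1 \<le> matvec W (\<lambda>v. min (\<phi> v) 1) u" for u
  proof (cases "\<exists>v. W u v = 1 \<and> 1 \<le> \<phi> v")
    case True
    then obtain v where v: "W u v = 1" "1 \<le> \<phi> v" by auto
    have "0 \<le> W u w * min (\<phi> w) 1" for w
      using W01[rule_format, of u w] \<phi>_nonneg[of w] by auto
    then have "W u v * min (\<phi> v) 1 \<le> matvec W (\<lambda>v. min (\<phi> v) 1) u"
      unfolding matvec_def by (intro member_le_sum) auto
    with v show ?thesis by simp
  next
    case False
    then have "W u w * min (\<phi> w) 1 = W u w * \<phi> w" for w
      using W01[rule_format, of u w] by auto
    then have "matvec W (\<lambda>v. min (\<phi> v) 1) u = matvec W \<phi> u"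
      unfolding matvec_def by (intro sum.cong) auto
    with feasible show ?thesis unfolding feasible_def by auto
  qed
  with \<phi>_nonneg show ?thesis unfolding feasible_def by auto
qed

lemma card_minus_l1norm_le:
  fixes W :: "'v::finite \<Rightarrow> 'v \<Rightarrow> real"
  assumes W01: "\<forall>u v. W u v \<in> {0, 1}" and sym: "\<forall>u v. W u v = W v u"
    and feasible_\<theta>: "feasible W \<theta>" and feasible_\<phi>: "feasible W \<phi>"
  shows "real CARD('v) - l1norm \<phi> \<le> (\<Sum>u\<in>UNIV. matvec W \<theta> u) - (\<Sum>u\<in>UNIV. \<theta> u)"
proof -
  define p where "p v = min (\<phi> v) 1" for v
  have Wp: "1 \<le> matvec W p u" for u
    using feasible_min_one[OF W01 feasible_\<phi>] unfolding p_def feasible_def by auto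
  have W\<theta>: "1 \<le> matvec W \<theta> u" and \<theta>_nonneg: "0 \<le> \<theta> u" for u
    using feasible_\<theta> unfolding feasible_def by auto
  have "real CARD('v) - l1norm \<phi> \<le> (\<Sum>u\<in>UNIV. 1 - p u)"
    using feasible_\<phi> unfolding l1norm_def p_def feasible_def
    by (simp add: sum_subtractf sum_mono)
  also have "\<dots> \<le> (\<Sum>u\<in>UNIV. (1 - p u) * matvec W \<theta> u)"
  proof (rule sum_mono)
    fix u
    have "(1 - p u) * 1 \<le> (1 - p u) * matvec W \<theta> u"
      using W\<theta> by (intro mult_left_mono) (auto simp: p_def)
    then show "1 - p u \<le> (1 - p u) * matvec W \<theta> u" by simp
  qed
  also have "\<dots> = (\<Sum>u\<in>UNIV. (matvec W (\<lambda>_. 1) u - matvec W p u) * \<theta> u)"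
    using sum_mult_matvec_sym[OF sym, of "\<lambda>u. 1 - p u"] by (simp add: matvec_diff)
  also have "\<dots> \<le> (\<Sum>u\<in>UNIV. (matvec W (\<lambda>_. 1) u - 1) * \<theta> u)"
    using Wp \<theta>_nonneg by (intro sum_mono mult_right_mono) auto
  also have "\<dots> = (\<Sum>u\<in>UNIV. matvec W \<theta> u) - (\<Sum>u\<in>UNIV. \<theta> u)"
    using sum_mult_matvec_sym[OF sym, of "\<lambda>_. 1" \<theta>]
    by (simp add: left_diff_distrib sum_subtractf)
  finally show ?thesis .
qed

lemma le_OPT:
  assumes "feasible W \<theta>" and "\<And>\<phi>. feasible W \<phi> \<Longrightarrow> c \<le> l1norm \<phi>"
  shows "c \<le> OPT W"
  unfolding OPT_def using assms by (intro cInf_greatest) auto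

theorem lemma5p8:
  fixes W :: "'v::finite \<Rightarrow> 'v \<Rightarrow> real" and \<theta> :: "'v \<Rightarrow> real"
  assumes "unit_weight_matrix W"
    and "feasible W \<theta>"
    and "\<forall>v. \<theta> v \<le> 1"
  shows "l1norm (matvec W \<theta>) \<ge> real CARD('v) + l1norm \<theta> - OPT W"
proof -
  have W01: "\<forall>u v. W u v \<in> {0, 1}" and sym: "\<forall>u v. W u v = W v u"
    using assms(1) unfolding unit_weight_matrix_def by auto
  have \<theta>_nonneg: "0 \<le> \<theta> v" for v
    using assms(2) unfolding feasible_def by auto
  have "0 \<le> W u v" for u v
    using W01 by (metis empty_iff insert_iff order.refl zero_le_one)
  with \<theta>_nonneg have excess:
    "l1norm (matvec W \<theta>) - l1norm \<theta> = (\<Sum>u\<in>UNIV. matvec W \<theta> u) - (\<Sum>u\<in>UNIV. \<theta> u)"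
    by (simp add: l1norm_nonneg_eq_sum matvec_nonneg)
  moreover have "real CARD('v) - (l1norm (matvec W \<theta>) - l1norm \<theta>) \<le> OPT W"
  proof (rule le_OPT[OF assms(2)])
    fix \<phi> assume "feasible W \<phi>"
    from card_minus_l1norm_le[OF W01 sym assms(2) this] excess
    show "real CARD('v) - (l1norm (matvec W \<theta>) - l1norm \<theta>) \<le> l1norm \<phi>" by linarith
  qed
  ultimately show ?thesis by linarith
qed

end
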